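(* Let $y\in\mathbb{R}^N$, $\lambda>0$ and $\alpha\geq 0$. Let $$F(x)=\|x\|_1-\alpha\|x\|_2+\frac{1}{2\lambda}\|x-y\|_2^2,$$ and let $x^*$ be any minimizer of $F$ over $\mathbb{R}^N$. Then for every $x\in\mathbb{R}^N$, $$F(x^* )-F(x)\leq \min\left(\frac{\alpha}{2\|x^*\|_2}-\frac{1}{2\lambda},\,0\right)\|x^*-x\|_2^2,$$ where, when $x^*=0$, the quantity $\alpha/0$ is interpreted as $0$ if $\alpha=0$ and as $+\infty$ if $\alpha>0$. *)

theory Defs
  imports "HOL-Analysis.Analysis"
begin

text \<open>The l1 norm of a vector in R^N (index type 'n finite, N = CARD('n)).\<close>
definition l1norm :: "real ^ 'n \<Rightarrow> real" where
  "l1norm x = (\<Sum>i\<in>UNIV. \<bar>x $ i\<bar>)"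

definition Fobj :: "real \<Rightarrow> real \<Rightarrow> real ^ 'n \<Rightarrow> real ^ 'n \<Rightarrow> real" where
  "Fobj alpha lambda y x = l1norm x - alpha * norm x + (1 / (2 * lambda)) * (norm (x - y))\<^sup>2"

end

theory Submission
  imports Defs
begin

text \<open>
  With \<open>u = sgn xs\<close>, the function \<open>H z = \<parallel>z\<parallel>\<^sub>1 - \<alpha> \<langle>u, z\<rangle>\<close> is convex and
  \<open>H z + \<parallel>z - y\<parallel>\<^sup>2 / (2\<lambda>)\<close> majorises \<open>F\<close>, with equality at \<open>xs\<close> because
  \<open>\<langle>u, z\<rangle> \<le> \<parallel>z\<parallel>\<close> with equality at \<open>z = xs\<close>. So \<open>xs\<close> also minimises this
  \<open>1/\<lambda>\<close>-strongly convex majorant, whence the majorant grows at least by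
  \<open>\<parallel>x - xs\<parallel>\<^sup>2 / (2\<lambda>)\<close> away from \<open>xs\<close>. The gap between the majorant and \<open>F\<close>
  at \<open>x\<close> is \<open>\<alpha> (\<parallel>x\<parallel> - \<langle>u, x\<rangle>)\<close>, which is at most \<open>\<alpha> \<parallel>x - xs\<parallel>\<^sup>2 / (2 \<parallel>xs\<parallel>)\<close>.
\<close>

lemma norm_convex_comb_power2:
  fixes a b :: "'a::real_inner"
  shows "(norm ((1 - t) *\<^sub>R a + t *\<^sub>R b))\<^sup>2
           = (1 - t) * (norm a)\<^sup>2 + t * (norm b)\<^sup>2 - t * (1 - t) * (norm (a - b))\<^sup>2"
  unfolding power2_norm_eq_inner
  by (simp add: inner_diff_left inner_diff_right inner_add_left inner_add_right
      inner_commute algebra_simps)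

lemma le_of_le_add_mult_small:
  fixes a b K :: real
  assumes "K \<ge> 0" and small: "\<And>t. 0 < t \<Longrightarrow> t \<le> 1 \<Longrightarrow> a \<le> b + t * K"
  shows "a \<le> b"
proof (rule field_le_epsilon)
  fix e :: real
  assume "e > 0"
  define t where "t = min 1 (e / (K + 1))"
  have "0 < t" "t \<le> 1" using \<open>e > 0\<close> \<open>K \<ge> 0\<close> by (simp_all add: t_def)
  have "t * K \<le> e / (K + 1) * K"
    using \<open>K \<ge> 0\<close> by (intro mult_right_mono) (simp_all add: t_def)
  also have "\<dots> \<le> e"
    using \<open>e > 0\<close> \<open>K \<ge> 0\<close> by (simp add: field_simps)
  finally show "a \<le> b + e" using small[OF \<open>0 < t\<close> \<open>t \<le> 1\<close>] by linarith
qed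

lemma convex_on_plus_sq_dist_min_growth:
  fixes H :: "'a::real_inner \<Rightarrow> real"
  assumes "convex_on UNIV H" and "c \<ge> 0"
    and min: "\<forall>z. H xs + c * (norm (xs - y))\<^sup>2 \<le> H z + c * (norm (z - y))\<^sup>2"
  shows "H xs + c * (norm (xs - y))\<^sup>2 + c * (norm (x - xs))\<^sup>2 \<le> H x + c * (norm (x - y))\<^sup>2"
proof -
  define G where "G z = H z + c * (norm (z - y))\<^sup>2" for z
  define K where "K = c * (norm (x - xs))\<^sup>2"
  have "G xs \<le> G x - K + t * K" if "0 < t" "t \<le> 1" for t
  proof -
    have shift: "(1 - t) *\<^sub>R xs + t *\<^sub>R x - y = (1 - t) *\<^sub>R (xs - y) + t *\<^sub>R (x - y)"
      by (simp add: algebra_simps)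
    have "G xs \<le> G ((1 - t) *\<^sub>R xs + t *\<^sub>R x)"
      using min by (simp add: G_def)
    also have "\<dots> \<le> (1 - t) * H xs + t * H x
        + c * ((1 - t) * (norm (xs - y))\<^sup>2 + t * (norm (x - y))\<^sup>2 - t * (1 - t) * (norm (x - xs))\<^sup>2)"
      using convex_onD[OF assms(1), of t xs x] that \<open>c \<ge> 0\<close>
      by (simp add: G_def shift norm_convex_comb_power2 norm_minus_commute)
    also have "\<dots> = (1 - t) * G xs + t * G x - t * (1 - t) * K"
      by (simp add: G_def K_def algebra_simps)
    finally have "t * G xs \<le> t * (G x - K + t * K)"
      by (simp add: algebra_simps)
    then show ?thesis using that by simp
  qed
  moreover have "K \<ge> 0"
    using \<open>c \<ge> 0\<close> by (simp add: K_def)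
  ultimately have "G xs \<le> G x - K"
    using le_of_le_add_mult_small by blast
  then show ?thesis by (simp add: G_def K_def)
qed

lemma convex_on_l1norm: "convex_on UNIV l1norm"
proof (rule convex_onI)
  fix t :: real and a b :: "real ^ 'n"
  assume "0 < t" "t < 1"
  have "\<bar>(1 - t) * a $ i + t * b $ i\<bar> \<le> (1 - t) * \<bar>a $ i\<bar> + t * \<bar>b $ i\<bar>" for i
    using abs_triangle_ineq[of "(1 - t) * a $ i" "t * b $ i"] \<open>0 < t\<close> \<open>t < 1\<close>
    by (simp add: abs_mult)
  then have "(\<Sum>i\<in>UNIV. \<bar>(1 - t) * a $ i + t * b $ i\<bar>)
             \<le> (\<Sum>i\<in>UNIV. (1 - t) * \<bar>a $ i\<bar> + t * \<bar>b $ i\<bar>)"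
    by (rule sum_mono)
  then show "l1norm ((1 - t) *\<^sub>R a + t *\<^sub>R b) \<le> (1 - t) * l1norm a + t * l1norm b"
    by (simp add: l1norm_def sum.distrib sum_distrib_left)
qed simp

lemma convex_on_l1norm_minus_inner:
  "convex_on UNIV (\<lambda>z :: real ^ 'n. l1norm z - alpha * inner u z)"
proof (rule convex_onI)
  fix t :: real and a b :: "real ^ 'n"
  assume "0 < t" "t < 1"
  then show "l1norm ((1 - t) *\<^sub>R a + t *\<^sub>R b) - alpha * inner u ((1 - t) *\<^sub>R a + t *\<^sub>R b)
      \<le> (1 - t) * (l1norm a - alpha * inner u a) + t * (l1norm b - alpha * inner u b)"
    using convex_onD[OF convex_on_l1norm, of t a b]
    by (simp add: inner_add_right algebra_simps)
qed simp

lemma inner_sgn_le_norm: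
  fixes x z :: "'a::real_inner"
  shows "inner (sgn x) z \<le> norm z"
proof -
  have "inner (sgn x) z \<le> norm (sgn x) * norm z"
    by (rule norm_cauchy_schwarz)
  also have "\<dots> \<le> norm z"
    by (cases "x = 0") (simp_all add: norm_sgn)
  finally show ?thesis .
qed

lemma inner_sgn_self: "inner (sgn x) x = norm (x :: 'a::real_inner)"
  by (cases "x = 0") (simp_all add: sgn_div_norm power2_norm_eq_inner[symmetric] power2_eq_square)

lemma norm_minus_inner_sgn_le:
  fixes xs x :: "'a::real_inner"
  assumes "xs \<noteq> 0"
  shows "norm x - inner (sgn xs) x \<le> (norm (xs - x))\<^sup>2 / (2 * norm xs)"
proof -
  have "0 < norm xs" using assms by simp
  have "2 * norm xs * (norm x - inner (sgn xs) x) = 2 * norm xs * norm x - 2 * inner xs x"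
    using \<open>0 < norm xs\<close> by (simp add: sgn_div_norm algebra_simps)
  also have "\<dots> \<le> (norm xs)\<^sup>2 - 2 * inner xs x + (norm x)\<^sup>2"
    using power2_diff[of "norm xs" "norm x"] zero_le_power2[of "norm xs - norm x"] by linarith
  also have "\<dots> = (norm (xs - x))\<^sup>2"
    by (simp add: power2_norm_eq_inner inner_diff_left inner_diff_right inner_commute)
  finally show ?thesis
    using \<open>0 < norm xs\<close> by (simp add: field_simps)
qed

lemma Fobj_min_growth:
  fixes y xs x :: "real ^ 'n"
  assumes "lambda > 0" and "alpha \<ge> 0"
    and min: "\<forall>z. Fobj alpha lambda y xs \<le> Fobj alpha lambda y z"
  shows "Fobj alpha lambda y xs - Fobj alpha lambda y x
           \<le> alpha * (norm x - inner (sgn xs) x) - (norm (xs - x))\<^sup>2 / (2 * lambda)"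
proof -
  define H where "H = (\<lambda>z. l1norm z - alpha * inner (sgn xs) z)"
  define c where "c = 1 / (2 * lambda)"
  have F_eq: "Fobj alpha lambda y z
      = H z + c * (norm (z - y))\<^sup>2 - alpha * (norm z - inner (sgn xs) z)" for z
    by (simp add: Fobj_def H_def c_def algebra_simps)
  have "c \<ge> 0"
    using \<open>lambda > 0\<close> by (simp add: c_def)
  have "convex_on UNIV H"
    unfolding H_def by (rule convex_on_l1norm_minus_inner)
  have F_xs: "Fobj alpha lambda y xs = H xs + c * (norm (xs - y))\<^sup>2"
    using F_eq[of xs] by (simp add: inner_sgn_self)
  have "\<forall>z. H xs + c * (norm (xs - y))\<^sup>2 \<le> H z + c * (norm (z - y))\<^sup>2"
  proof
    fix z
    have "alpha * (norm z - inner (sgn xs) z) \<ge> 0"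
      using \<open>alpha \<ge> 0\<close> inner_sgn_le_norm[of xs z] by simp
    then show "H xs + c * (norm (xs - y))\<^sup>2 \<le> H z + c * (norm (z - y))\<^sup>2"
      using spec[OF min, of z] F_eq[of z] F_xs by linarith
  qed
  then have "H xs + c * (norm (xs - y))\<^sup>2 + c * (norm (x - xs))\<^sup>2 \<le> H x + c * (norm (x - y))\<^sup>2"
    by (rule convex_on_plus_sq_dist_min_growth[OF \<open>convex_on UNIV H\<close> \<open>c \<ge> 0\<close>])
  moreover have "c * (norm (x - xs))\<^sup>2 = (norm (xs - x))\<^sup>2 / (2 * lambda)"
    by (simp add: c_def norm_minus_commute)
  ultimately show ?thesis
    using F_xs F_eq[of x] by linarith
qed

theorem lemma2:
  fixes y xs :: "real ^ 'n" and lambda alpha :: real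
  assumes "lambda > 0" and "alpha \<ge> 0"
    and "\<forall>z. Fobj alpha lambda y xs \<le> Fobj alpha lambda y z"
  shows "\<forall>x. Fobj alpha lambda y xs - Fobj alpha lambda y x
           \<le> (if xs = 0 \<and> alpha > 0 then 0
               else min (alpha / (2 * norm xs) - 1 / (2 * lambda)) 0) * (norm (xs - x))\<^sup>2"
proof
  fix x
  have gap: "Fobj alpha lambda y xs - Fobj alpha lambda y x \<le> 0"
    using assms(3) by simp
  have growth: "Fobj alpha lambda y xs - Fobj alpha lambda y x
      \<le> alpha * (norm x - inner (sgn xs) x) - (norm (xs - x))\<^sup>2 / (2 * lambda)"
    using Fobj_min_growth[OF assms] .
  consider "xs = 0" "alpha > 0" | "xs = 0" "alpha = 0" | "xs \<noteq> 0"
    using assms(2) by linarith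
  then show "Fobj alpha lambda y xs - Fobj alpha lambda y x
      \<le> (if xs = 0 \<and> alpha > 0 then 0
          else min (alpha / (2 * norm xs) - 1 / (2 * lambda)) 0) * (norm (xs - x))\<^sup>2"
  proof cases
    case 1
    with gap show ?thesis by simp
  next
    case 2
    \<comment> \<open>HOL's \<open>0 / 0 = 0\<close> realises the convention \<open>\<alpha> / 0 = 0\<close> for \<open>\<alpha> = 0\<close>.\<close>
    with growth \<open>lambda > 0\<close> show ?thesis by (simp add: min_def)
  next
    case 3
    have "alpha * (norm x - inner (sgn xs) x) \<le> alpha * ((norm (xs - x))\<^sup>2 / (2 * norm xs))"
      using norm_minus_inner_sgn_le[OF 3] assms(2) by (rule mult_left_mono)
    moreover have "(alpha / (2 * norm xs) - 1 / (2 * lambda)) * (norm (xs - x))\<^sup>2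
        = alpha * ((norm (xs - x))\<^sup>2 / (2 * norm xs)) - (norm (xs - x))\<^sup>2 / (2 * lambda)"
      by (simp add: left_diff_distrib)
    ultimately have "Fobj alpha lambda y xs - Fobj alpha lambda y x
        \<le> (alpha / (2 * norm xs) - 1 / (2 * lambda)) * (norm (xs - x))\<^sup>2"
      using growth by linarith
    with gap 3 show ?thesis by (simp add: min_def)
  qed
qed

end
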